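(* Let $q\in(0,1)$, $\alpha\in(-1,1)$, $\beta<1$ real, and $n\ge-1$ an integer. Then $\psi_n^+$ is analytic in the punctured unit disc $\{z\in\mathbb{C}:0<|z|<1\}$, and its zeros there are all real, simple, and symmetrically distributed with respect to the origin. Moreover, between any two neighboring zeros of $\psi_n^+$ in $(0,1)$ there is exactly one zero of $\psi_{n+1}^+$.
   Context: $(a;q)_n:=\prod_{j=0}^{n-1}(1-aq^j)$, $n\in\mathbb{N}_0\cup\{\infty\}$. For $z\ne0$ and integers $n\ge-1$, \[ \psi_n^+(z):=z^n\sum_{k=0}^\infty\frac{(q^{k+1}z^2;q)_\infty}{(q;q)_k}c_k(z)q^{(n+1)k},\qquad c_k(z):=\prod_{j=0}^{k-1}\bigl(\alpha(1+z^2q^{2j})-\beta q^j(1+z^2)\bigr), \] i.e. $\psi_n^+(z)=z^n(qz^2;q)_\infty\,{}_2\phi_1(z\tau,z\tau^{-1};qz^2;q,\alpha q^{n+1})$ with $\alpha(\tau+\tau^{-1})=\beta(z+z^{-1})$. *)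

theory Defs
  imports "HOL-Complex_Analysis.Complex_Analysis"
begin

definition qpoch :: "complex \<Rightarrow> complex \<Rightarrow> nat \<Rightarrow> complex" where
  "qpoch a q n = (\<Prod>j<n. 1 - a * q ^ j)"

definition qpoch_inf :: "complex \<Rightarrow> complex \<Rightarrow> complex" where
  "qpoch_inf a q = (\<Prod>j. 1 - a * q ^ j)"

definition cfun :: "real \<Rightarrow> real \<Rightarrow> real \<Rightarrow> nat \<Rightarrow> complex \<Rightarrow> complex" where
  "cfun q \<alpha> \<beta> k z = (\<Prod>j<k. of_real \<alpha> * (1 + z\<^sup>2 * of_real q ^ (2*j))
        - of_real \<beta> * of_real q ^ j * (1 + z\<^sup>2))"

definition psi_plus :: "real \<Rightarrow> real \<Rightarrow> real \<Rightarrow> int \<Rightarrow> complex \<Rightarrow> complex" where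
  "psi_plus q \<alpha> \<beta> n z = z powi n *
     (\<Sum>k. qpoch_inf (of_real q ^ (k+1) * z\<^sup>2) (of_real q) / qpoch (of_real q) (of_real q) k
           * cfun q \<alpha> \<beta> k z * of_real q ^ (nat (n+1) * k))"

end

theory Submission
  imports Defs
begin

(* Put H_j(z) = z^j S_j(z), where S_j(z) = sum_k t_k(z) q^(jk) is the series in psi_n^+, so that
   psi_n^+(z) = H_(n+1)(z) / z.  The shift rule (a;q)_inf = (1 - a) (aq;q)_inf relates consecutive
   terms t_k and turns the series into the three-term recurrence
   H_(j+2) = (z + 1/z) w_j H_(j+1) - H_j  with weights  w_j = (1 - beta q^j) / (1 - alpha q^j) > 0.
   For |z| < 1 both H_j(z) and H_j'(z) tend to 0 as j -> infinity, while S_j(z) tends to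
   (q z^2; q)_inf, which is nonzero, so H_j and H_(j+1) have no common zero.  Telescoping the
   Casoratian of the recurrence from index k to infinity, once against the conjugate solution and
   once against the derivative, shows that zeros of H_k are real and that the Wronskian
   H_k H_(k+1)' - H_(k+1) H_k' is positive on (-1, 1) - {0}.  Positivity of the Wronskian gives
   simplicity of the zeros and, by Sturm's argument, the interlacing; evenness of S_j gives the
   symmetry. *)

section \<open>The infinite q-Pochhammer symbol\<close>

lemma qpoch_inf_has_prod:
  assumes "norm q < 1"
  shows "(\<lambda>j. 1 - a * q ^ j) has_prod qpoch_inf a q"
proof -
  have "summable (\<lambda>j. norm a * norm q ^ j)"
    using assms by (intro summable_mult summable_geometric) simp
  then have "abs_convergent_prod (\<lambda>j. 1 - a * q ^ j)"
    by (simp add: abs_convergent_prod_conv_summable norm_mult norm_power)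
  then show ?thesis
    unfolding qpoch_inf_def
    by (simp add: abs_convergent_prod_imp_convergent_prod convergent_prod_has_prod)
qed

lemma qpoch_inf_shift:
  assumes "norm q < 1"
  shows "qpoch_inf a q = (1 - a) * qpoch_inf (a * q) q"
proof -
  have "(\<lambda>j. 1 - a * q ^ Suc j) has_prod qpoch_inf (a * q) q"
    using qpoch_inf_has_prod[OF assms, of "a * q"] by (simp add: mult_ac)
  then have "(\<lambda>j. 1 - a * q ^ j) has_prod (qpoch_inf (a * q) q * (1 - a))"
    using has_prod_Suc_imp[where f = "\<lambda>j. 1 - a * q ^ j"] by simp
  with qpoch_inf_has_prod[OF assms] show ?thesis
    by (metis has_prod_unique2 mult.commute)
qed

lemma qpoch_inf_nonzero:
  assumes "norm q < 1" "norm a < 1"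
  shows "qpoch_inf a q \<noteq> 0"
proof
  assume "qpoch_inf a q = 0"
  then obtain j where "a * q ^ j = 1"
    using has_prod_eq_0_iff[OF qpoch_inf_has_prod[OF assms(1)]] by auto
  moreover have "norm (a * q ^ j) \<le> norm a"
    using assms(1) by (simp add: norm_mult norm_power mult_left_le power_le_one)
  ultimately show False
    using assms(2) by simp
qed

lemma qpoch_inf_cnj:
  assumes "norm q < 1"
  shows "qpoch_inf (cnj a) (cnj q) = cnj (qpoch_inf a q)"
proof -
  have "(\<lambda>n. cnj (\<Prod>j<n. 1 - a * q ^ j)) \<longlonglongrightarrow> cnj (qpoch_inf a q)"
    by (intro tendsto_cnj has_prod_imp_tendsto' qpoch_inf_has_prod assms)
  moreover have "(\<lambda>n. cnj (\<Prod>j<n. 1 - a * q ^ j)) \<longlonglongrightarrow> qpoch_inf (cnj a) (cnj q)"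
    using has_prod_imp_tendsto'[OF qpoch_inf_has_prod, of "cnj q" "cnj a"] assms
    by (simp add: cnj_prod)
  ultimately show ?thesis
    using LIMSEQ_unique by metis
qed

lemma norm_qpoch_inf_le:
  assumes "norm q < 1"
  shows "norm (qpoch_inf a q) \<le> exp (norm a / (1 - norm q))"
proof (rule tendsto_le[OF _ tendsto_const])
  show "(\<lambda>n. norm (\<Prod>j<n. 1 - a * q ^ j)) \<longlonglongrightarrow> norm (qpoch_inf a q)"
    by (intro tendsto_norm has_prod_imp_tendsto' qpoch_inf_has_prod assms)
  have geometric: "summable (\<lambda>j. norm a * norm q ^ j)"
    using assms by (intro summable_mult summable_geometric) simp
  have "norm (\<Prod>j<n. 1 - a * q ^ j) \<le> exp (norm a / (1 - norm q))" for n
  proof -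
    have "norm (\<Prod>j<n. 1 - a * q ^ j) \<le> (\<Prod>j<n. exp (norm a * norm q ^ j))"
      unfolding prod_norm[symmetric]
    proof (intro prod_mono conjI norm_ge_zero)
      fix j
      have "norm (1 - a * q ^ j) \<le> 1 + norm a * norm q ^ j"
        using norm_triangle_ineq4[of 1 "a * q ^ j"] by (simp add: norm_mult norm_power)
      also have "\<dots> \<le> exp (norm a * norm q ^ j)"
        by (rule exp_ge_add_one_self)
      finally show "norm (1 - a * q ^ j) \<le> exp (norm a * norm q ^ j)" .
    qed
    also have "\<dots> = exp (\<Sum>j<n. norm a * norm q ^ j)"
      by (simp add: exp_sum)
    also have "(\<Sum>j<n. norm a * norm q ^ j) \<le> (\<Sum>j. norm a * norm q ^ j)"
      by (intro sum_le_suminf geometric) auto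
    also have "\<dots> = norm a / (1 - norm q)"
      using assms by (simp add: suminf_mult suminf_geometric divide_inverse)
    finally show ?thesis by simp
  qed
  then show "\<forall>\<^sub>F n in sequentially. norm (\<Prod>j<n. 1 - a * q ^ j) \<le> exp (norm a / (1 - norm q))"
    by simp
qed simp

lemma holomorphic_qpoch_inf:
  assumes "norm q < 1"
  shows "(\<lambda>a. qpoch_inf a q) holomorphic_on A"
proof -
  have "(\<lambda>a. qpoch_inf a q) holomorphic_on UNIV"
  proof (rule holomorphic_uniform_sequence[where f = "\<lambda>n a. \<Prod>j<n. 1 - a * q ^ j"])
    fix z :: complex
    define R where "R = norm z + 1"
    have "uniformly_convergent_on (cball 0 R) (\<lambda>n a. \<Prod>j<n. 1 - a * q ^ j)"
    proof (rule uniformly_convergent_on_prod')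
      show "uniformly_convergent_on (cball 0 R) (\<lambda>n a. \<Sum>j<n. norm (1 - a * q ^ j - 1))"
        using assms
        by (intro Weierstrass_m_test'[where M = "\<lambda>j. R * norm q ^ j"] summable_mult summable_geometric)
           (auto simp: norm_mult norm_power intro!: mult_right_mono)
    qed (auto intro!: continuous_intros)
    then obtain g where g: "uniform_limit (cball 0 R) (\<lambda>n a. \<Prod>j<n. 1 - a * q ^ j) g sequentially"
      by (auto simp: uniformly_convergent_on_def)
    have "g a = qpoch_inf a q" if "a \<in> cball 0 R" for a
      using tendsto_uniform_limitI[OF g that] has_prod_imp_tendsto'[OF qpoch_inf_has_prod[OF assms]]
      by (rule LIMSEQ_unique)
    with g have "uniform_limit (cball 0 R) (\<lambda>n a. \<Prod>j<n. 1 - a * q ^ j) (\<lambda>a. qpoch_inf a q) sequentially"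
      by (metis (no_types, lifting) uniform_limit_cong')
    then have "uniform_limit (cball z 1) (\<lambda>n a. \<Prod>j<n. 1 - a * q ^ j) (\<lambda>a. qpoch_inf a q) sequentially"
      by (rule uniform_limit_on_subset) (simp add: cball_subset_cball_iff R_def)
    then show "\<exists>d>0. cball z d \<subseteq> UNIV \<and>
        uniform_limit (cball z d) (\<lambda>n a. \<Prod>j<n. 1 - a * q ^ j) (\<lambda>a. qpoch_inf a q) sequentially"
      by (intro exI[of _ 1]) auto
  qed (auto intro!: holomorphic_intros)
  then show ?thesis
    by (rule holomorphic_on_subset) simp
qed


section \<open>Three-term recurrences and Sturm comparison\<close>

lemma casoratian_telescope:
  fixes a b w e :: "nat \<Rightarrow> 'a :: comm_ring"
  assumes a: "\<And>j. a (Suc (Suc j)) = c * w j * a (Suc j) - a j"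
    and b: "\<And>j. b (Suc (Suc j)) = d * w j * b (Suc j) - b j + e j"
  shows "a m * b (Suc m) - a (Suc m) * b m
    = a 0 * b 1 - a 1 * b 0 + (\<Sum>i<m. ((d - c) * w i * b (Suc i) + e i) * a (Suc i))"
proof (induction m)
  case (Suc m)
  have "a (Suc m) * b (Suc (Suc m)) - a (Suc (Suc m)) * b (Suc m)
      = a m * b (Suc m) - a (Suc m) * b m + ((d - c) * w m * b (Suc m) + e m) * a (Suc m)"
    unfolding a b by (simp add: algebra_simps)
  with Suc.IH show ?case
    by simp
qed simp

lemma tendsto_0_affine_incseq:
  fixes C c :: complex and S :: "nat \<Rightarrow> real"
  assumes lim: "(\<lambda>m. C + c * of_real (S m)) \<longlonglongrightarrow> 0" and "c \<noteq> 0" and "incseq S"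
  shows "\<exists>L \<ge> S N. C = - c * of_real L"
proof -
  have "(\<lambda>m. (C + c * of_real (S m) - C) / c) \<longlonglongrightarrow> (0 - C) / c"
    by (intro tendsto_intros lim \<open>c \<noteq> 0\<close>)
  then have lim_S: "(\<lambda>m. of_real (S m) :: complex) \<longlonglongrightarrow> - C / c"
    using \<open>c \<noteq> 0\<close> by simp
  define L where "L = Re (- C / c)"
  have "(\<lambda>m. Im (of_real (S m))) \<longlonglongrightarrow> Im (- C / c)"
    using lim_S by (rule tendsto_Im)
  then have "Im (- C / c) = 0"
    by (simp add: LIMSEQ_const_iff)
  then have "- C / c = of_real L"
    by (simp add: L_def complex_eq_iff)
  moreover have "C = - c * (- C / c)"
    using \<open>c \<noteq> 0\<close> by simp
  ultimately have "C = - c * of_real L"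
    by simp
  moreover have "S \<longlonglongrightarrow> L"
    using tendsto_Re[OF lim_S] by (simp add: L_def)
  then have "S N \<le> L"
    by (rule incseq_le[OF \<open>incseq S\<close>])
  ultimately show ?thesis
    by blast
qed

lemma quotient_strict_mono_if_wronskian_pos:
  fixes f g f' g' :: "real \<Rightarrow> real"
  assumes "s < t"
    and df: "\<And>x. s \<le> x \<Longrightarrow> x \<le> t \<Longrightarrow> (f has_real_derivative f' x) (at x)"
    and dg: "\<And>x. s \<le> x \<Longrightarrow> x \<le> t \<Longrightarrow> (g has_real_derivative g' x) (at x)"
    and f: "\<And>x. s \<le> x \<Longrightarrow> x \<le> t \<Longrightarrow> f x \<noteq> 0"
    and W: "\<And>x. s \<le> x \<Longrightarrow> x \<le> t \<Longrightarrow> 0 < f x * g' x - g x * f' x"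
  shows "g s / f s < g t / f t"
proof (rule DERIV_pos_imp_increasing[OF \<open>s < t\<close>])
  fix x assume x: "s \<le> x" "x \<le> t"
  have "((\<lambda>x. g x / f x) has_real_derivative (g' x * f x - g x * f' x) / (f x * f x)) (at x)"
    using dg[OF x] df[OF x] f[OF x] by (rule DERIV_divide)
  moreover have "0 < (g' x * f x - g x * f' x) / (f x * f x)"
  proof (rule divide_pos_pos)
    show "0 < g' x * f x - g x * f' x"
      using W[OF x] by (simp add: mult.commute)
    show "0 < f x * f x"
      using f[OF x] not_real_square_gt_zero by blast
  qed
  ultimately show "\<exists>y. ((\<lambda>x. g x / f x) has_real_derivative y) (at x) \<and> 0 < y"
    by blast
qed

lemma sturm_interlacing:
  fixes f g f' g' :: "real \<Rightarrow> real"
  assumes "a < b"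
    and df: "\<And>x. a \<le> x \<Longrightarrow> x \<le> b \<Longrightarrow> (f has_real_derivative f' x) (at x)"
    and dg: "\<And>x. a \<le> x \<Longrightarrow> x \<le> b \<Longrightarrow> (g has_real_derivative g' x) (at x)"
    and W: "\<And>x. a \<le> x \<Longrightarrow> x \<le> b \<Longrightarrow> 0 < f x * g' x - g x * f' x"
    and "f a = 0" "f b = 0" and f: "\<And>x. a < x \<Longrightarrow> x < b \<Longrightarrow> f x \<noteq> 0"
  shows "\<exists>!t. a < t \<and> t < b \<and> g t = 0"
proof (rule ex_ex1I)
  show "\<exists>t. a < t \<and> t < b \<and> g t = 0"
  proof (rule ccontr)
    assume no_zero: "\<not> ?thesis"
    have "g x \<noteq> 0" if "a \<le> x" "x \<le> b" for x
      using W[OF that] no_zero that \<open>f a = 0\<close> \<open>f b = 0\<close>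
      by (cases "x = a \<or> x = b") (auto simp: le_less)
    then have "- f a / g a < - f b / g b"
      using \<open>a < b\<close> df dg W
      by (intro quotient_strict_mono_if_wronskian_pos[where f = g and f' = g'
            and g = "\<lambda>x. - f x" and g' = "\<lambda>x. - f' x"])
         (auto intro: DERIV_minus simp: algebra_simps)
    with \<open>f a = 0\<close> \<open>f b = 0\<close> show False
      by simp
  qed
next
  have False if "a < t1" "t1 < t2" "t2 < b" "g t1 = 0" "g t2 = 0" for t1 t2
  proof -
    have "g t1 / f t1 < g t2 / f t2"
      using that df dg f W
      by (intro quotient_strict_mono_if_wronskian_pos[where f' = f' and g' = g']) auto
    with that show False
      by simp
  qed
  then show "t1 = t2" if "a < t1 \<and> t1 < b \<and> g t1 = 0" "a < t2 \<and> t2 < b \<and> g t2 = 0" for t1 t2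
    using that by (metis linorder_neqE_linordered_idom)
qed


section \<open>The functions psi_n^+ as a sequence in n\<close>

lemma real_if_Im_add_inverse_eq_0:
  fixes z :: complex
  assumes "norm z < 1" "Im (z + inverse z) = 0"
  shows "z \<in> \<real>"
proof (cases "z = 0")
  case False
  have "Im z * (1 - 1 / norm z ^ 2) = 0"
    using assms(2) by (simp add: cmod_power2 right_diff_distrib)
  moreover have "norm z ^ 2 < 1" "0 < norm z ^ 2"
    using assms(1) False by (simp_all add: power_less_one_iff)
  then have "1 - 1 / norm z ^ 2 \<noteq> 0"
    by (simp add: field_simps)
  ultimately have "Im z = 0"
    by (metis mult_eq_0_iff)
  then show ?thesis
    by (simp add: complex_is_Real_iff)
qed simp

lemma deriv_tendsto_0_if_norm_le_power:
  fixes f :: "nat \<Rightarrow> complex \<Rightarrow> complex"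
  assumes holo: "\<And>n. f n holomorphic_on ball 0 1"
    and bound: "\<And>n w. norm w < 1 \<Longrightarrow> norm (f n w) \<le> norm w ^ n * B"
    and z: "norm z < 1"
  shows "(\<lambda>n. deriv (f n) z) \<longlonglongrightarrow> 0"
proof (rule Lim_null_comparison)
  define r where "r = (1 + norm z) / 2"
  define d where "d = r - norm z"
  have r: "0 \<le> r" "r < 1" and d: "0 < d"
    using z by (auto simp: r_def d_def)
  have "norm (f 0 0) \<le> B"
    using bound[of 0 0] by simp
  then have B: "0 \<le> B"
    using norm_ge_zero[of "f 0 0"] by linarith
  have near: "norm w \<le> r" if "norm (z - w) \<le> d" for w
    using norm_triangle_ineq2[of w z] that by (simp add: d_def norm_minus_commute)
  then have sub: "cball z d \<subseteq> ball 0 1"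
    using r by (force simp: dist_norm)
  have "norm ((deriv ^^ 1) (f n) z) \<le> fact 1 * (r ^ n * B) / d ^ 1" for n
  proof (rule Cauchy_inequality[OF _ _ d])
    show "f n holomorphic_on ball z d"
      using holo sub ball_subset_cball holomorphic_on_subset by blast
    show "continuous_on (cball z d) (f n)"
      using holo sub holomorphic_on_imp_continuous_on holomorphic_on_subset by blast
    fix w assume "norm (z - w) = d"
    then have w: "norm w \<le> r"
      by (intro near) simp
    then have "norm (f n w) \<le> norm w ^ n * B"
      using r by (intro bound) simp
    also have "\<dots> \<le> r ^ n * B"
      using w B by (intro mult_right_mono power_mono) auto
    finally show "norm (f n w) \<le> r ^ n * B" .
  qed
  then show "\<forall>\<^sub>F n in sequentially. norm (deriv (f n) z) \<le> r ^ n * B / d"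
    by (intro always_eventually allI) simp
  show "(\<lambda>n. r ^ n * B / d) \<longlonglongrightarrow> 0"
    using r d tendsto_mult_left_zero[OF LIMSEQ_power_zero, of r B] by (simp add: tendsto_divide_zero)
qed

locale psi_setting =
  fixes q \<alpha> \<beta> :: real
  assumes q_pos: "0 < q" and q_less_1: "q < 1" and abs_alpha_less_1: "\<bar>\<alpha>\<bar> < 1"
begin

definition psi_term :: "nat \<Rightarrow> complex \<Rightarrow> complex" where
  "psi_term k z = qpoch_inf (of_real q ^ (k+1) * z\<^sup>2) (of_real q)
     / qpoch (of_real q) (of_real q) k * cfun q \<alpha> \<beta> k z"

definition psi_series :: "nat \<Rightarrow> complex \<Rightarrow> complex" where
  "psi_series j z = (\<Sum>k. psi_term k z * of_real q ^ (j * k))"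

(* exp (1 / (1 - q)) bounds the infinite product on the closed unit disc, and the i-th factor
   bounds the i-th factor of cfun divided by that of (q;q)_k. *)
definition psi_majorant :: "nat \<Rightarrow> real" where
  "psi_majorant k = exp (1 / (1 - q))
     * (\<Prod>i<k. (\<bar>\<alpha>\<bar> * (1 + q ^ (2*i)) + 2 * \<bar>\<beta>\<bar> * q ^ i) / (1 - q ^ Suc i))"

lemma norm_of_real_q: "norm (of_real q :: complex) < 1"
  using q_pos q_less_1 by simp

lemma q_power_le_1: "q ^ i \<le> 1"
  using q_pos q_less_1 by (simp add: power_le_one)

lemma q_power_Suc_less_1: "q ^ Suc i < 1"
  using q_pos q_less_1 by (rule power_Suc_less_one)

lemma norm_cfun_factor_le:
  fixes z :: complex
  assumes "norm z \<le> 1"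
  shows "norm (of_real \<alpha> * (1 + z\<^sup>2 * of_real q ^ (2*i)) - of_real \<beta> * of_real q ^ i * (1 + z\<^sup>2))
    \<le> \<bar>\<alpha>\<bar> * (1 + q ^ (2*i)) + 2 * \<bar>\<beta>\<bar> * q ^ i"
proof -
  have z2: "norm (z\<^sup>2) \<le> 1"
    using assms by (simp add: norm_power power_le_one_iff)
  have "norm (z\<^sup>2 * of_real q ^ (2*i)) \<le> q ^ (2*i)"
    using z2 q_pos by (simp add: norm_mult norm_power mult_left_le_one_le)
  then have A: "norm (1 + z\<^sup>2 * of_real q ^ (2*i)) \<le> 1 + q ^ (2*i)"
    using norm_triangle_ineq[of 1 "z\<^sup>2 * of_real q ^ (2*i)"] by simp
  have B: "norm (1 + z\<^sup>2) \<le> 2"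
    using z2 norm_triangle_ineq[of 1 "z\<^sup>2"] by simp
  have "norm (of_real \<alpha> * (1 + z\<^sup>2 * of_real q ^ (2*i)) - of_real \<beta> * of_real q ^ i * (1 + z\<^sup>2))
      \<le> norm (of_real \<alpha> * (1 + z\<^sup>2 * of_real q ^ (2*i))) + norm (of_real \<beta> * of_real q ^ i * (1 + z\<^sup>2))"
    by (rule norm_triangle_ineq4)
  also have "\<dots> = \<bar>\<alpha>\<bar> * norm (1 + z\<^sup>2 * of_real q ^ (2*i)) + \<bar>\<beta>\<bar> * q ^ i * norm (1 + z\<^sup>2)"
    using q_pos by (simp add: norm_mult norm_power)
  also have "\<dots> \<le> \<bar>\<alpha>\<bar> * (1 + q ^ (2*i)) + \<bar>\<beta>\<bar> * q ^ i * 2"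
    using A B q_pos by (intro add_mono mult_left_mono) auto
  finally show ?thesis
    by simp
qed

lemma norm_psi_term_le:
  assumes "norm z \<le> 1"
  shows "norm (psi_term k z) \<le> psi_majorant k"
proof -
  have "norm (of_real q ^ (k+1) * z\<^sup>2) \<le> 1"
    using assms q_pos q_power_le_1[of "k+1"]
    by (simp add: norm_mult norm_power mult_le_one power_le_one)
  then have "norm (of_real q ^ (k+1) * z\<^sup>2) / (1 - q) \<le> 1 / (1 - q)"
    using q_less_1 by (simp add: divide_right_mono)
  then have P: "norm (qpoch_inf (of_real q ^ (k+1) * z\<^sup>2) (of_real q)) \<le> exp (1 / (1 - q))"
    using norm_qpoch_inf_le[OF norm_of_real_q, of "of_real q ^ (k+1) * z\<^sup>2"] q_pos
    by (simp add: order_trans)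
  have C: "norm (cfun q \<alpha> \<beta> k z) \<le> (\<Prod>i<k. \<bar>\<alpha>\<bar> * (1 + q ^ (2*i)) + 2 * \<bar>\<beta>\<bar> * q ^ i)"
    unfolding cfun_def prod_norm[symmetric]
    by (intro prod_mono conjI norm_ge_zero norm_cfun_factor_le assms)
  have pos: "0 < (\<Prod>i<k. 1 - q ^ Suc i)"
    using q_power_Suc_less_1 by (intro prod_pos) simp
  have "qpoch (of_real q) (of_real q) k = of_real (\<Prod>i<k. 1 - q ^ Suc i)"
    by (simp add: qpoch_def)
  then have qpoch_norm: "norm (qpoch (of_real q) (of_real q) k) = (\<Prod>i<k. 1 - q ^ Suc i)"
    using pos by (metis abs_of_pos norm_of_real)
  have "norm (psi_term k z) = norm (qpoch_inf (of_real q ^ (k+1) * z\<^sup>2) (of_real q))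
      * norm (cfun q \<alpha> \<beta> k z) / (\<Prod>i<k. 1 - q ^ Suc i)"
    unfolding psi_term_def norm_mult norm_divide qpoch_norm by simp
  also have "\<dots> \<le> psi_majorant k"
    unfolding psi_majorant_def prod_dividef times_divide_eq_right
    using P C pos by (intro divide_right_mono mult_mono) auto
  finally show ?thesis .
qed

lemma summable_psi_majorant: "summable psi_majorant"
proof -
  define \<rho> where "\<rho> i = (\<bar>\<alpha>\<bar> * (1 + q ^ (2*i)) + 2 * \<bar>\<beta>\<bar> * q ^ i) / (1 - q ^ Suc i)" for i
  have "\<rho> \<longlonglongrightarrow> (\<bar>\<alpha>\<bar> * (1 + 0) + 2 * \<bar>\<beta>\<bar> * 0) / (1 - q * 0)"
    unfolding \<rho>_def power_Suc power_mult using q_pos q_less_1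
    by (intro tendsto_intros) (auto simp: abs_square_less_1)
  then have "\<forall>\<^sub>F i in sequentially. \<rho> i < (1 + \<bar>\<alpha>\<bar>) / 2"
    using abs_alpha_less_1 by (intro order_tendstoD(2)) auto
  then obtain N where N: "\<And>i. i \<ge> N \<Longrightarrow> \<rho> i < (1 + \<bar>\<alpha>\<bar>) / 2"
    unfolding eventually_sequentially by blast
  have \<rho>_nonneg: "0 \<le> \<rho> i" for i
    unfolding \<rho>_def using q_pos q_power_Suc_less_1[of i] by (intro divide_nonneg_pos) auto
  have majorant_eq: "psi_majorant k = exp (1 / (1 - q)) * (\<Prod>i<k. \<rho> i)" for k
    by (simp add: psi_majorant_def \<rho>_def)
  have majorant_nonneg: "0 \<le> psi_majorant i" for i
    unfolding majorant_eq using \<rho>_nonneg by (auto intro!: mult_nonneg_nonneg prod_nonneg)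
  show ?thesis
  proof (rule summable_ratio_test[of "(1 + \<bar>\<alpha>\<bar>) / 2" N])
    fix n assume "N \<le> n"
    then have "\<rho> n * psi_majorant n \<le> (1 + \<bar>\<alpha>\<bar>) / 2 * psi_majorant n"
      using N majorant_nonneg by (intro mult_right_mono) (auto simp: less_imp_le)
    moreover have "psi_majorant (Suc n) = \<rho> n * psi_majorant n"
      by (simp add: majorant_eq)
    ultimately show "norm (psi_majorant (Suc n)) \<le> (1 + \<bar>\<alpha>\<bar>) / 2 * norm (psi_majorant n)"
      using majorant_nonneg[of n] majorant_nonneg[of "Suc n"] by simp
  qed (use abs_alpha_less_1 in simp)
qed

lemma norm_psi_series_term_le:
  assumes "norm z \<le> 1"
  shows "norm (psi_term k z * of_real q ^ (j * k)) \<le> psi_majorant k"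
proof -
  have "norm (psi_term k z * of_real q ^ (j * k)) = norm (psi_term k z) * q ^ (j * k)"
    using q_pos by (simp add: norm_mult norm_power)
  also have "\<dots> \<le> norm (psi_term k z)"
    using q_power_le_1 q_pos by (simp add: mult_right_le_one_le)
  also have "\<dots> \<le> psi_majorant k"
    by (rule norm_psi_term_le[OF assms])
  finally show ?thesis .
qed

lemma summable_norm_psi_series:
  assumes "norm z \<le> 1"
  shows "summable (\<lambda>k. norm (psi_term k z * of_real q ^ (j * k)))"
  by (rule summable_comparison_test'[OF summable_psi_majorant])
     (simp add: norm_psi_series_term_le assms)

lemma psi_series_sums:
  assumes "norm z \<le> 1"
  shows "(\<lambda>k. psi_term k z * of_real q ^ (j * k)) sums psi_series j z"
  unfolding psi_series_def
  using summable_norm_psi_series[OF assms] by (simp add: summable_norm_cancel summable_sums)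

lemma norm_psi_series_le:
  assumes "norm z \<le> 1"
  shows "norm (psi_series j z) \<le> (\<Sum>k. psi_majorant k)"
proof -
  have "norm (psi_series j z) \<le> (\<Sum>k. norm (psi_term k z * of_real q ^ (j * k)))"
    unfolding psi_series_def by (rule summable_norm[OF summable_norm_psi_series[OF assms]])
  also have "\<dots> \<le> (\<Sum>k. psi_majorant k)"
    by (intro suminf_le summable_norm_psi_series summable_psi_majorant
        norm_psi_series_term_le assms)
  finally show ?thesis .
qed

lemma holomorphic_psi_term: "psi_term k holomorphic_on A"
proof -
  have "(\<lambda>a. qpoch_inf a (of_real q)) \<circ> (\<lambda>z. of_real q ^ (k+1) * z\<^sup>2) holomorphic_on A"
    by (intro holomorphic_on_compose holomorphic_intros holomorphic_qpoch_inf norm_of_real_q)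
  then show ?thesis
    unfolding psi_term_def cfun_def o_def by (intro holomorphic_intros) auto
qed

lemma holomorphic_psi_series: "psi_series j holomorphic_on ball 0 1"
proof -
  define f where "f k z = psi_term k z * of_real q ^ (j * k)" for k z
  have "f k holomorphic_on UNIV" for k
    unfolding f_def by (intro holomorphic_intros holomorphic_psi_term)
  then have deriv: "(f k has_field_derivative deriv (f k) z) (at z)" for k z
    by (rule holomorphic_derivI) auto
  have "\<forall>\<^sub>F k in sequentially. \<forall>z\<in>ball 0 1. norm (f k z) \<le> psi_majorant k"
    unfolding f_def by (intro always_eventually allI ballI norm_psi_series_term_le) simp
  then obtain g g' where g: "\<forall>z\<in>ball 0 1. (\<lambda>k. f k z) sums g z
      \<and> (\<lambda>k. deriv (f k) z) sums g' z \<and> (g has_field_derivative g' z) (at z)"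
    by (rule series_and_derivative_comparison[OF open_ball summable_psi_majorant deriv])
  have "g holomorphic_on ball 0 1"
    using g by (auto simp: holomorphic_on_open)
  then show ?thesis
  proof (rule holomorphic_transform)
    fix z :: complex assume "z \<in> ball 0 1"
    then have "(\<lambda>k. f k z) sums g z" "(\<lambda>k. f k z) sums psi_series j z"
      using g psi_series_sums[of z j] unfolding f_def by auto
    then show "g z = psi_series j z"
      by (rule sums_unique2)
  qed
qed

lemma psi_series_tendsto:
  assumes "norm z \<le> 1"
  shows "(\<lambda>j. psi_series j z) \<longlonglongrightarrow> psi_term 0 z"
proof -
  define b where "b k = (if k = 0 then psi_term 0 z else 0)" for k :: nat
  have lim: "(\<lambda>j. psi_term k z * of_real q ^ (j * k)) \<longlonglongrightarrow> b k" for k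
  proof (cases "k = 0")
    case False
    have "(\<lambda>j. (of_real q ^ k) ^ j :: complex) \<longlonglongrightarrow> 0"
      using q_pos q_power_Suc_less_1[of "k - 1"] False
      by (intro LIMSEQ_power_zero) (simp add: norm_power)
    then have "(\<lambda>j. psi_term k z * (of_real q ^ k) ^ j) \<longlonglongrightarrow> psi_term k z * 0"
      by (intro tendsto_mult tendsto_const)
    then show ?thesis
      using False by (simp add: b_def power_mult[symmetric] mult.commute[of _ k])
  qed (simp add: b_def)
  have "\<forall>\<^sub>F (k, j) in sequentially \<times>\<^sub>F sequentially.
      norm (psi_term k z * of_real q ^ (j * k)) \<le> psi_majorant k"
    using norm_psi_series_term_le[OF assms] by (intro always_eventually) auto
  then have "(\<lambda>j. \<Sum>k. psi_term k z * of_real q ^ (j * k)) \<longlonglongrightarrow> suminf b"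
    using tannerys_theorem[OF lim _ summable_psi_majorant] by simp
  moreover have "suminf b = psi_term 0 z"
    unfolding b_def using sums_single[of 0 "\<lambda>_. psi_term 0 z"] by (simp add: sums_iff)
  ultimately show ?thesis
    by (simp add: psi_series_def)
qed

lemma psi_term_0_nonzero:
  assumes "norm z \<le> 1"
  shows "psi_term 0 z \<noteq> 0"
proof -
  have "q * norm z ^ 2 \<le> q * 1"
    using assms q_pos by (intro mult_left_mono) (auto simp: power_le_one)
  moreover have "norm (of_real q * z\<^sup>2) = q * norm z ^ 2"
    using q_pos by (simp add: norm_mult norm_power)
  ultimately have "norm (of_real q * z\<^sup>2) < 1"
    using q_less_1 by linarith
  then have "qpoch_inf (of_real q * z\<^sup>2) (of_real q) \<noteq> 0"
    by (rule qpoch_inf_nonzero[OF norm_of_real_q])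
  then show ?thesis
    by (simp add: psi_term_def qpoch_def cfun_def)
qed

lemma psi_term_cnj: "psi_term k (cnj z) = cnj (psi_term k z)"
proof -
  have "qpoch_inf (of_real q ^ (k+1) * (cnj z)\<^sup>2) (of_real q)
      = cnj (qpoch_inf (of_real q ^ (k+1) * z\<^sup>2) (of_real q))"
    using qpoch_inf_cnj[OF norm_of_real_q, of "of_real q ^ (k+1) * z\<^sup>2"] by simp
  moreover have "cnj (qpoch (of_real q) (of_real q) k) = qpoch (of_real q) (of_real q) k"
    by (simp add: qpoch_def)
  moreover have "cfun q \<alpha> \<beta> k (cnj z) = cnj (cfun q \<alpha> \<beta> k z)"
    by (simp add: cfun_def)
  ultimately show ?thesis
    by (simp add: psi_term_def)
qed

lemma psi_series_cnj:
  assumes "norm z \<le> 1"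
  shows "psi_series j (cnj z) = cnj (psi_series j z)"
proof -
  have "(\<lambda>k. cnj (psi_term k z * of_real q ^ (j * k))) sums cnj (psi_series j z)"
    using psi_series_sums[OF assms] by (simp only: sums_cnj)
  then have "(\<lambda>k. psi_term k (cnj z) * of_real q ^ (j * k)) sums cnj (psi_series j z)"
    by (simp add: psi_term_cnj)
  with psi_series_sums[of "cnj z" j] assms show ?thesis
    by (simp add: sums_unique2)
qed

lemma psi_term_Suc:
  "psi_term (Suc k) z * (1 - of_real q ^ Suc k) * (1 - of_real q ^ Suc k * z\<^sup>2)
   = psi_term k z * (of_real \<alpha> * (1 + z\<^sup>2 * of_real q ^ (2*k)) - of_real \<beta> * of_real q ^ k * (1 + z\<^sup>2))"
proof -
  have factor_nonzero: "1 - of_real q ^ Suc i \<noteq> (0 :: complex)" for i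
  proof -
    have "1 - q ^ Suc i \<noteq> 0"
      using q_power_Suc_less_1[of i] by simp
    then have "of_real (1 - q ^ Suc i) \<noteq> (0 :: complex)"
      using of_real_eq_0_iff by blast
    then show ?thesis
      by simp
  qed
  then have qpoch_nonzero: "qpoch (of_real q) (of_real q) k \<noteq> 0"
    by (simp add: qpoch_def)
  have qpoch_Suc: "qpoch (of_real q) (of_real q) (Suc k)
      = qpoch (of_real q) (of_real q) k * (1 - of_real q ^ Suc k)"
    by (simp add: qpoch_def)
  have cfun_Suc: "cfun q \<alpha> \<beta> (Suc k) z = cfun q \<alpha> \<beta> k z
      * (of_real \<alpha> * (1 + z\<^sup>2 * of_real q ^ (2*k)) - of_real \<beta> * of_real q ^ k * (1 + z\<^sup>2))"
    by (simp add: cfun_def)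
  have qpoch_inf_Suc: "qpoch_inf (of_real q ^ (k+1) * z\<^sup>2) (of_real q)
      = (1 - of_real q ^ Suc k * z\<^sup>2) * qpoch_inf (of_real q ^ (Suc k + 1) * z\<^sup>2) (of_real q)"
    using qpoch_inf_shift[OF norm_of_real_q, of "of_real q ^ (k+1) * z\<^sup>2"] by (simp add: mult_ac)
  show ?thesis
    unfolding psi_term_def qpoch_Suc cfun_Suc qpoch_inf_Suc
    using qpoch_nonzero factor_nonzero[of k] by (simp add: field_simps)
qed

lemma psi_series_combination_sums:
  assumes "norm z \<le> 1"
  shows "(\<lambda>k. psi_term k z * of_real q ^ (j * k) * (u + v * of_real q ^ k + w * of_real q ^ (2 * k)))
    sums (u * psi_series j z + v * psi_series (j+1) z + w * psi_series (j+2) z)"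
proof -
  have shifted: "(\<lambda>k. psi_term k z * of_real q ^ (j * k) * of_real q ^ (i * k)) sums psi_series (j+i) z" for i
    using psi_series_sums[OF assms, of "j+i"] by (simp add: add_mult_distrib power_add mult.assoc)
  show ?thesis
    using sums_add[OF sums_add[OF sums_mult[OF shifted[of 0], of u] sums_mult[OF shifted[of 1], of v]]
        sums_mult[OF shifted[of 2], of w]]
    by (simp add: algebra_simps)
qed

lemma psi_series_recurrence:
  assumes "norm z \<le> 1"
  shows "(1 - of_real (\<alpha> * q ^ j)) * psi_series j z
    - (1 + z\<^sup>2) * (1 - of_real (\<beta> * q ^ j)) * psi_series (j+1) z
    + z\<^sup>2 * (1 - of_real (\<alpha> * q ^ j)) * psi_series (j+2) z = 0"
proof -
  define Q :: complex where "Q = of_real q"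
  define t where "t k = psi_term k z * Q ^ (j * k)" for k
  define e where "e k = of_real \<alpha> * (1 + z\<^sup>2 * Q ^ (2*k)) - of_real \<beta> * Q ^ k * (1 + z\<^sup>2)" for k
  define L where "L = psi_series j z - (1 + z\<^sup>2) * psi_series (j+1) z + z\<^sup>2 * psi_series (j+2) z"
  define R where "R = of_real \<alpha> * psi_series j z - of_real \<beta> * (1 + z\<^sup>2) * psi_series (j+1) z
    + of_real \<alpha> * z\<^sup>2 * psi_series (j+2) z"
  have "(\<lambda>k. t k * (1 - Q ^ k) * (1 - Q ^ k * z\<^sup>2)) sums L"
    using psi_series_combination_sums[OF assms, of j 1 "- (1 + z\<^sup>2)" "z\<^sup>2"]
    by (simp add: t_def L_def Q_def power_mult mult.commute[of 2] power2_eq_square algebra_simps)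
  then have "(\<lambda>k. t (Suc k) * (1 - Q ^ Suc k) * (1 - Q ^ Suc k * z\<^sup>2)) sums L"
    by (subst sums_Suc_iff) simp
  moreover have "(\<lambda>k. t k * e k) sums R"
    using psi_series_combination_sums[OF assms, of j "of_real \<alpha>" "- of_real \<beta> * (1 + z\<^sup>2)" "of_real \<alpha> * z\<^sup>2"]
    by (simp add: t_def e_def R_def Q_def algebra_simps)
  moreover have "t (Suc k) * (1 - Q ^ Suc k) * (1 - Q ^ Suc k * z\<^sup>2) = Q ^ j * (t k * e k)" for k
    using psi_term_Suc[of k z] by (simp add: t_def e_def Q_def power_add mult_ac)
  ultimately have "(\<lambda>k. t (Suc k) * (1 - Q ^ Suc k) * (1 - Q ^ Suc k * z\<^sup>2)) sums L"
    "(\<lambda>k. t (Suc k) * (1 - Q ^ Suc k) * (1 - Q ^ Suc k * z\<^sup>2)) sums (Q ^ j * R)"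
    by (simp_all add: sums_mult)
  then have "L = Q ^ j * R"
    by (rule sums_unique2)
  then show ?thesis
    by (simp add: L_def R_def Q_def algebra_simps)
qed

definition psi_weight :: "nat \<Rightarrow> real" where
  "psi_weight j = (1 - \<beta> * q ^ j) / (1 - \<alpha> * q ^ j)"

definition zpsi :: "nat \<Rightarrow> complex \<Rightarrow> complex" where
  "zpsi j z = z ^ j * psi_series j z"

lemma alpha_q_power_less_1: "\<alpha> * q ^ j < 1"
proof -
  have "\<bar>\<alpha> * q ^ j\<bar> \<le> \<bar>\<alpha>\<bar>"
    using q_pos q_power_le_1 by (simp add: abs_mult mult_left_le)
  then show ?thesis
    using abs_alpha_less_1 by linarith
qed

lemma zpsi_recurrence:
  assumes "norm z \<le> 1" "z \<noteq> 0"
  shows "zpsi (j+2) z = (z + inverse z) * of_real (psi_weight j) * zpsi (j+1) z - zpsi j z"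
proof -
  define a :: complex where "a = of_real (1 - \<alpha> * q ^ j)"
  define b :: complex where "b = of_real (1 - \<beta> * q ^ j)"
  have "a \<noteq> 0"
    unfolding a_def of_real_eq_0_iff using alpha_q_power_less_1[of j] by simp
  have "a * z * (zpsi (j+2) z + zpsi j z) - (1 + z\<^sup>2) * b * zpsi (j+1) z
      = z ^ (j+1) * (a * psi_series j z - (1 + z\<^sup>2) * b * psi_series (j+1) z
          + z\<^sup>2 * a * psi_series (j+2) z)"
    by (simp add: zpsi_def power_add power2_eq_square algebra_simps)
  also have "\<dots> = 0"
    using psi_series_recurrence[OF assms(1), of j] by (simp add: a_def b_def)
  finally have "a * z * (zpsi (j+2) z + zpsi j z) = (1 + z\<^sup>2) * b * zpsi (j+1) z"
    by simp
  with \<open>a \<noteq> 0\<close> assms(2) show ?thesis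
    by (simp add: psi_weight_def a_def b_def field_simps power2_eq_square)
qed

lemma psi_plus_eq_zpsi:
  assumes "n \<ge> -1" "z \<noteq> 0"
  shows "psi_plus q \<alpha> \<beta> n z = zpsi (nat (n+1)) z / z"
proof -
  have "z powi n * z = z powi (n + 1)"
    using assms(2) by (simp add: power_int_add)
  also have "\<dots> = z ^ nat (n+1)"
    using assms(1) by (simp add: power_int_def)
  finally show ?thesis
    using assms(2) by (simp add: psi_plus_def zpsi_def psi_series_def psi_term_def field_simps)
qed

lemma holomorphic_zpsi: "zpsi j holomorphic_on ball 0 1"
  unfolding zpsi_def[abs_def] by (intro holomorphic_intros holomorphic_psi_series)

lemma norm_zpsi_le:
  assumes "norm z \<le> 1"
  shows "norm (zpsi j z) \<le> norm z ^ j * (\<Sum>k. psi_majorant k)"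
  unfolding zpsi_def norm_mult norm_power
  using norm_psi_series_le[OF assms] by (intro mult_left_mono) auto

lemma zpsi_tendsto_0:
  assumes "norm z < 1"
  shows "(\<lambda>j. zpsi j z) \<longlonglongrightarrow> 0"
proof (rule Lim_null_comparison)
  show "\<forall>\<^sub>F j in sequentially. norm (zpsi j z) \<le> norm z ^ j * (\<Sum>k. psi_majorant k)"
    using assms by (intro always_eventually allI norm_zpsi_le) simp
  show "(\<lambda>j. norm z ^ j * (\<Sum>k. psi_majorant k)) \<longlonglongrightarrow> 0"
    using assms by (simp add: LIMSEQ_power_zero tendsto_mult_left_zero)
qed

lemma deriv_zpsi_tendsto_0:
  assumes "norm z < 1"
  shows "(\<lambda>j. deriv (zpsi j) z) \<longlonglongrightarrow> 0"
  using holomorphic_zpsi norm_zpsi_le assms by (rule deriv_tendsto_0_if_norm_le_power) simp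

lemma zpsi_shift_tendsto_0:
  assumes "norm z < 1"
  shows "(\<lambda>m. zpsi (k + m) z) \<longlonglongrightarrow> 0" "(\<lambda>m. deriv (zpsi (k + m)) z) \<longlonglongrightarrow> 0"
  using LIMSEQ_ignore_initial_segment[OF zpsi_tendsto_0[OF assms], of k]
    LIMSEQ_ignore_initial_segment[OF deriv_zpsi_tendsto_0[OF assms], of k]
  by (simp_all add: add.commute)

lemma has_field_derivative_zpsi:
  assumes "norm z < 1"
  shows "(zpsi j has_field_derivative deriv (zpsi j) z) (at z)"
  using holomorphic_zpsi by (rule holomorphic_derivI) (use assms in auto)

lemma deriv_zpsi_recurrence:
  assumes "norm z < 1" "z \<noteq> 0"
  shows "deriv (zpsi (j+2)) z = (1 - inverse z ^ 2) * of_real (psi_weight j) * zpsi (j+1) z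
    + (z + inverse z) * of_real (psi_weight j) * deriv (zpsi (j+1)) z - deriv (zpsi j) z"
proof -
  define w :: complex where "w = of_real (psi_weight j)"
  define F where "F u = (u + inverse u) * w * zpsi (j+1) u - zpsi j u" for u
  have "\<forall>\<^sub>F u in nhds z. u \<in> ball 0 1 - {0}"
    using assms by (intro eventually_nhds_in_open) auto
  then have "\<forall>\<^sub>F u in nhds z. zpsi (j+2) u = F u"
  proof eventually_elim
    case (elim u)
    then have "norm u \<le> 1" "u \<noteq> 0"
      by auto
    then show ?case
      using zpsi_recurrence by (simp add: F_def w_def)
  qed
  then have "deriv (zpsi (j+2)) z = deriv F z"
    by (rule deriv_cong_ev) simp
  also have "\<dots> = (1 - inverse z ^ 2) * w * zpsi (j+1) z
      + (z + inverse z) * w * deriv (zpsi (j+1)) z - deriv (zpsi j) z"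
  proof (rule DERIV_imp_deriv)
    show "(F has_field_derivative (1 - inverse z ^ 2) * w * zpsi (j+1) z
        + (z + inverse z) * w * deriv (zpsi (j+1)) z - deriv (zpsi j) z) (at z)"
      unfolding F_def using has_field_derivative_zpsi[OF assms(1)] assms(2)
      by (auto intro!: derivative_eq_intros simp: algebra_simps power2_eq_square)
  qed
  finally show ?thesis
    by (simp add: w_def)
qed

lemma zpsi_cnj:
  assumes "norm z \<le> 1"
  shows "zpsi j (cnj z) = cnj (zpsi j z)"
  using psi_series_cnj[OF assms] by (simp add: zpsi_def)

lemma zpsi_real:
  assumes "\<bar>x\<bar> \<le> 1"
  shows "zpsi j (of_real x) \<in> \<real>"
  using zpsi_cnj[of "of_real x" j] assms by (simp add: Reals_cnj_iff)

lemma zpsi_of_real_eq_0_iff: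
  assumes "\<bar>x\<bar> \<le> 1"
  shows "zpsi j (of_real x) = 0 \<longleftrightarrow> Re (zpsi j (of_real x)) = 0"
  using zpsi_real[OF assms, of j] by (auto simp: complex_is_Real_iff complex_eq_iff)

lemma has_real_derivative_Re_zpsi:
  assumes "\<bar>x\<bar> < 1"
  shows "((\<lambda>t. Re (zpsi j (of_real t))) has_real_derivative Re (deriv (zpsi j) (of_real x))) (at x)"
proof -
  have "((\<lambda>t. zpsi j (of_real t)) has_vector_derivative deriv (zpsi j) (of_real x)) (at x)"
    using assms by (intro has_vector_derivative_real_field has_field_derivative_zpsi) simp
  then show ?thesis
    by (rule has_field_derivative_Re)
qed

lemma zpsi_not_both_zero:
  assumes "norm z \<le> 1" "z \<noteq> 0"
  shows "zpsi j z \<noteq> 0 \<or> zpsi (Suc j) z \<noteq> 0"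
proof (rule ccontr)
  assume "\<not> ?thesis"
  then have "zpsi (j + m) z = 0 \<and> zpsi (Suc (j + m)) z = 0" for m
  proof (induction m)
    case (Suc m)
    then show ?case
      using zpsi_recurrence[OF assms, of "j + m"] by simp
  qed simp
  then have "psi_series (j + m) z = 0" for m
    using assms(2) by (simp add: zpsi_def)
  moreover have "(\<lambda>m. psi_series (j + m) z) \<longlonglongrightarrow> psi_term 0 z"
    using LIMSEQ_ignore_initial_segment[OF psi_series_tendsto[OF assms(1)], of j]
    by (simp add: add.commute)
  ultimately have "(\<lambda>m. 0) \<longlonglongrightarrow> psi_term 0 z"
    by simp
  then have "psi_term 0 z = 0"
    using LIMSEQ_const_iff by metis
  with psi_term_0_nonzero[OF assms(1)] show False
    by simp
qed

lemma zpsi_cnj_casoratian: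
  assumes "norm z < 1" "z \<noteq> 0"
  shows "zpsi (k + m) z * cnj (zpsi (Suc (k + m)) z) - zpsi (Suc (k + m)) z * cnj (zpsi (k + m) z)
    = zpsi k z * cnj (zpsi (Suc k) z) - zpsi (Suc k) z * cnj (zpsi k z)
      + (cnj (z + inverse z) - (z + inverse z))
        * of_real (\<Sum>i<m. psi_weight (k + i) * norm (zpsi (Suc (k + i)) z) ^ 2)"
proof -
  define c where "c = z + inverse z"
  define a where "a i = zpsi (k + i) z" for i
  define w where "w i = (of_real (psi_weight (k + i)) :: complex)" for i
  have rec_a: "a (Suc (Suc i)) = c * w i * a (Suc i) - a i" for i
    using zpsi_recurrence[of z "k + i"] assms by (simp add: a_def c_def w_def)
  have rec_b: "cnj (a (Suc (Suc i))) = cnj c * w i * cnj (a (Suc i)) - cnj (a i) + 0" for i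
    using arg_cong[OF rec_a[of i], of cnj] by (simp add: w_def)
  have "((cnj c - c) * w i * cnj (a (Suc i)) + 0) * a (Suc i)
      = (cnj c - c) * of_real (psi_weight (k + i) * norm (a (Suc i)) ^ 2)" for i
    unfolding of_real_mult complex_norm_square by (simp add: w_def mult_ac)
  then have "(\<Sum>i<m. ((cnj c - c) * w i * cnj (a (Suc i)) + 0) * a (Suc i))
      = (\<Sum>i<m. (cnj c - c) * of_real (psi_weight (k + i) * norm (a (Suc i)) ^ 2))"
    by (rule sum.cong[OF refl])
  also have "\<dots> = (cnj c - c) * of_real (\<Sum>i<m. psi_weight (k + i) * norm (a (Suc i)) ^ 2)"
    by (simp add: sum_distrib_left)
  finally show ?thesis
    using casoratian_telescope[where b = "\<lambda>i. cnj (a i)", OF rec_a rec_b, of m]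
    by (simp add: a_def c_def)
qed

definition zpsi_wronskian :: "nat \<Rightarrow> complex \<Rightarrow> complex" where
  "zpsi_wronskian j z = zpsi j z * deriv (zpsi (Suc j)) z - zpsi (Suc j) z * deriv (zpsi j) z"

lemma zpsi_wronskian_telescope:
  assumes "norm z < 1" "z \<noteq> 0"
  shows "zpsi_wronskian (k + m) z = zpsi_wronskian k z
    + (1 - inverse z ^ 2) * (\<Sum>i<m. of_real (psi_weight (k + i)) * zpsi (Suc (k + i)) z ^ 2)"
proof -
  define a where "a i = zpsi (k + i) z" for i
  define b where "b i = deriv (zpsi (k + i)) z" for i
  define w where "w i = (of_real (psi_weight (k + i)) :: complex)" for i
  have rec_a: "a (Suc (Suc i)) = (z + inverse z) * w i * a (Suc i) - a i" for i
    using zpsi_recurrence[of z "k + i"] assms by (simp add: a_def w_def)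
  have rec_b: "b (Suc (Suc i)) = (z + inverse z) * w i * b (Suc i) - b i
      + (1 - inverse z ^ 2) * w i * a (Suc i)" for i
    using deriv_zpsi_recurrence[OF assms, of "k + i"] by (simp add: a_def b_def w_def algebra_simps)
  show ?thesis
    using casoratian_telescope[where e = "\<lambda>i. (1 - inverse z ^ 2) * w i * a (Suc i)", OF rec_a rec_b, of m]
    by (simp add: zpsi_wronskian_def a_def b_def w_def sum_distrib_left power2_eq_square mult_ac)
qed

lemma zpsi_wronskian_tendsto_0:
  assumes "norm z < 1"
  shows "(\<lambda>m. zpsi_wronskian (k + m) z) \<longlonglongrightarrow> 0"
proof -
  have "(\<lambda>m. zpsi_wronskian (k + m) z) \<longlonglongrightarrow> 0 * 0 - 0 * 0"
    unfolding zpsi_wronskian_def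
    using zpsi_shift_tendsto_0[OF assms, of k] zpsi_shift_tendsto_0[OF assms, of "Suc k"]
    by (intro tendsto_diff tendsto_mult) simp_all
  then show ?thesis
    by simp
qed

lemma psi_plus_analytic:
  assumes "n \<ge> -1"
  shows "psi_plus q \<alpha> \<beta> n analytic_on {z. 0 < norm z \<and> norm z < 1}"
proof -
  have D: "{z. 0 < norm z \<and> norm z < 1} = ball 0 1 - {0}"
    by auto
  have "(\<lambda>z. zpsi (nat (n+1)) z / z) holomorphic_on ball 0 1 - {0}"
    using holomorphic_zpsi by (intro holomorphic_intros) (auto intro: holomorphic_on_subset)
  then have "psi_plus q \<alpha> \<beta> n holomorphic_on ball 0 1 - {0}"
    by (rule holomorphic_transform) (simp add: psi_plus_eq_zpsi assms)
  then show ?thesis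
    unfolding D by (subst analytic_on_open) auto
qed

lemma deriv_psi_plus_at_zero:
  assumes "n \<ge> -1" "0 < norm z" "norm z < 1" "psi_plus q \<alpha> \<beta> n z = 0"
  shows "deriv (psi_plus q \<alpha> \<beta> n) z = deriv (zpsi (nat (n+1))) z / z"
proof (rule DERIV_imp_deriv)
  define j where "j = nat (n+1)"
  have "zpsi j z = 0"
    using assms psi_plus_eq_zpsi[of n z] by (simp add: j_def)
  have "((\<lambda>u. zpsi j u / u) has_field_derivative (deriv (zpsi j) z * z - zpsi j z * 1) / (z * z)) (at z)"
    using assms by (intro DERIV_divide has_field_derivative_zpsi DERIV_ident) auto
  then have "((\<lambda>u. zpsi j u / u) has_field_derivative deriv (zpsi j) z / z) (at z)"
    using \<open>zpsi j z = 0\<close> assms(2) by simp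
  then show "(psi_plus q \<alpha> \<beta> n has_field_derivative deriv (zpsi (nat (n+1))) z / z) (at z)"
    unfolding j_def
  proof (rule has_field_derivative_transform_within_open[where S = "ball 0 1 - {0}"])
    show "zpsi (nat (n + 1)) u / u = psi_plus q \<alpha> \<beta> n u" if "u \<in> ball 0 1 - {0}" for u
      using that assms(1) by (simp add: psi_plus_eq_zpsi)
  qed (use assms in auto)
qed

end

lemma psi_plus_minus_eq_0_iff: "psi_plus q \<alpha> \<beta> n (- z) = 0 \<longleftrightarrow> psi_plus q \<alpha> \<beta> n z = 0"
  by (simp add: psi_plus_def cfun_def)


section \<open>Zeros of psi_n^+\<close>

locale psi_setting_pos = psi_setting +
  assumes beta_less_1: "\<beta> < 1"
begin

lemma beta_q_power_less_1: "\<beta> * q ^ j < 1"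
proof (cases "\<beta> \<le> 0")
  case True
  then have "\<beta> * q ^ j \<le> 0"
    using q_pos by (simp add: mult_nonpos_nonneg)
  then show ?thesis
    by linarith
next
  case False
  then have "\<beta> * q ^ j \<le> \<beta>"
    using q_power_le_1 by (simp add: mult_left_le)
  then show ?thesis
    using beta_less_1 by linarith
qed

lemma psi_weight_pos: "0 < psi_weight j"
  using alpha_q_power_less_1[of j] beta_q_power_less_1[of j] by (simp add: psi_weight_def)

lemma zpsi_zero_real:
  assumes z: "norm z < 1" "z \<noteq> 0" and zero: "zpsi k z = 0"
  shows "z \<in> \<real>"
proof -
  define c where "c = z + inverse z"
  \<comment> \<open>The Casoratian of H_(k+m)(z) and its conjugate vanishes at m = 0 and as m tends to
    infinity, while each increment is cnj c - c times a nonnegative number.\<close>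
  define S where "S m = (\<Sum>i<m. psi_weight (k + i) * norm (zpsi (Suc (k + i)) z) ^ 2)" for m
  have "(\<lambda>m. zpsi (k + m) z * cnj (zpsi (Suc (k + m)) z) - zpsi (Suc (k + m)) z * cnj (zpsi (k + m) z))
      \<longlonglongrightarrow> 0 * cnj 0 - 0 * cnj 0"
    using zpsi_shift_tendsto_0(1)[OF z(1), of k] zpsi_shift_tendsto_0(1)[OF z(1), of "Suc k"]
    by (intro tendsto_intros) simp_all
  then have lim: "(\<lambda>m. 0 + (cnj c - c) * of_real (S m)) \<longlonglongrightarrow> 0"
    using zpsi_cnj_casoratian[OF z] zero by (simp add: c_def S_def)
  have "incseq S"
    using psi_weight_pos by (intro incseq_SucI) (simp add: S_def less_imp_le)
  have "zpsi (Suc k) z \<noteq> 0"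
    using zpsi_not_both_zero[of z k] z zero by simp
  then have "0 < S 1"
    using psi_weight_pos[of k] by (simp add: S_def)
  have "cnj c = c"
  proof (rule ccontr)
    assume "cnj c \<noteq> c"
    then obtain L where "L \<ge> S 1" "0 = - (cnj c - c) * of_real L"
      using tendsto_0_affine_incseq[OF lim] \<open>incseq S\<close> by force
    with \<open>cnj c \<noteq> c\<close> \<open>0 < S 1\<close> show False
      by simp
  qed
  then have "Im (z + inverse z) = 0"
    unfolding c_def by (metis Reals_cnj_iff complex_is_Real_iff)
  with z(1) show ?thesis
    by (rule real_if_Im_add_inverse_eq_0)
qed

lemma weighted_zpsi_squares_pos:
  assumes "x \<noteq> 0" "\<bar>x\<bar> < 1"
  shows "0 < (\<Sum>i<2. psi_weight (k + i) * Re (zpsi (Suc (k + i)) (of_real x)) ^ 2)"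
proof -
  have "zpsi (Suc k) (of_real x) \<noteq> 0 \<or> zpsi (Suc (Suc k)) (of_real x) \<noteq> 0"
    using zpsi_not_both_zero[of "of_real x" "Suc k"] assms by simp
  then have "Re (zpsi (Suc k) (of_real x)) \<noteq> 0 \<or> Re (zpsi (Suc (Suc k)) (of_real x)) \<noteq> 0"
    using zpsi_of_real_eq_0_iff assms(2) by simp
  then have "0 < psi_weight k * Re (zpsi (Suc k) (of_real x)) ^ 2
      \<or> 0 < psi_weight (Suc k) * Re (zpsi (Suc (Suc k)) (of_real x)) ^ 2"
    using psi_weight_pos by auto
  moreover have "0 \<le> psi_weight k * Re (zpsi (Suc k) (of_real x)) ^ 2"
    "0 \<le> psi_weight (Suc k) * Re (zpsi (Suc (Suc k)) (of_real x)) ^ 2"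
    using psi_weight_pos by (simp_all add: less_imp_le)
  moreover have "(\<Sum>i<2. psi_weight (k + i) * Re (zpsi (Suc (k + i)) (of_real x)) ^ 2)
      = psi_weight k * Re (zpsi (Suc k) (of_real x)) ^ 2
        + psi_weight (Suc k) * Re (zpsi (Suc (Suc k)) (of_real x)) ^ 2"
    by (simp add: numeral_2_eq_2)
  ultimately show ?thesis
    by linarith
qed

lemma zpsi_wronskian_pos:
  assumes x: "x \<noteq> 0" "\<bar>x\<bar> < 1"
  shows "0 < Re (zpsi_wronskian k (of_real x))"
proof -
  define X where "X = (of_real x :: complex)"
  have X: "norm X < 1" "X \<noteq> 0"
    using x by (simp_all add: X_def)
  define \<delta> where "\<delta> = 1 - inverse x ^ 2"
  \<comment> \<open>The Wronskian tends to 0 along the recurrence and each increment is \<delta> < 0 times a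
    nonnegative number, so it starts out positive.\<close>
  define S where "S m = (\<Sum>i<m. psi_weight (k + i) * Re (zpsi (Suc (k + i)) X) ^ 2)" for m
  have "zpsi (Suc (k + i)) X = of_real (Re (zpsi (Suc (k + i)) X))" for i
    using zpsi_real[of x "Suc (k + i)"] x by (simp add: X_def complex_is_Real_iff complex_eq_iff)
  then have "zpsi_wronskian (k + m) X = zpsi_wronskian k X + of_real \<delta> * of_real (S m)" for m
    using zpsi_wronskian_telescope[OF X, of k m] by (simp add: \<delta>_def X_def S_def)
  then have lim: "(\<lambda>m. zpsi_wronskian k X + of_real \<delta> * of_real (S m)) \<longlonglongrightarrow> 0"
    using zpsi_wronskian_tendsto_0[OF X(1), of k] by simp
  have "1 < inverse (x ^ 2)"
    using x by (intro one_less_inverse) (simp_all add: abs_square_less_1)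
  then have "\<delta> < 0"
    by (simp add: \<delta>_def power_inverse)
  have "incseq S"
    using psi_weight_pos by (intro incseq_SucI) (simp add: S_def less_imp_le)
  have "0 < S 2"
    using weighted_zpsi_squares_pos[OF x, of k] by (simp add: S_def X_def)
  obtain L where "L \<ge> S 2" "zpsi_wronskian k X = - of_real \<delta> * of_real L"
    using tendsto_0_affine_incseq[OF lim _ \<open>incseq S\<close>, of 2] \<open>\<delta> < 0\<close> by auto
  moreover have "0 < - \<delta> * L"
    using \<open>\<delta> < 0\<close> \<open>0 < S 2\<close> \<open>L \<ge> S 2\<close> by (simp add: mult_neg_pos)
  ultimately show ?thesis
    by (simp add: X_def)
qed

lemma deriv_zpsi_nonzero_if_zero:
  assumes "x \<noteq> 0" "\<bar>x\<bar> < 1" "zpsi j (of_real x) = 0"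
  shows "deriv (zpsi j) (of_real x) \<noteq> 0"
  using zpsi_wronskian_pos[OF assms(1,2), of j] assms(3) by (auto simp: zpsi_wronskian_def)

lemma psi_plus_zeros_real_simple:
  assumes "n \<ge> -1" "0 < norm z" "norm z < 1" "psi_plus q \<alpha> \<beta> n z = 0"
  shows "z \<in> \<real>" "deriv (psi_plus q \<alpha> \<beta> n) z \<noteq> 0"
proof -
  have "zpsi (nat (n+1)) z = 0"
    using assms psi_plus_eq_zpsi[of n z] by simp
  then show "z \<in> \<real>"
    using zpsi_zero_real assms by simp
  then obtain x where x: "z = of_real x"
    by (auto elim: Reals_cases)
  then have "deriv (zpsi (nat (n+1))) z \<noteq> 0"
    using deriv_zpsi_nonzero_if_zero \<open>zpsi (nat (n+1)) z = 0\<close> assms by auto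
  then show "deriv (psi_plus q \<alpha> \<beta> n) z \<noteq> 0"
    using deriv_psi_plus_at_zero[OF assms] assms(2) by simp
qed

lemma psi_plus_interlacing:
  assumes "n \<ge> -1" "0 < x1" "x1 < x2" "x2 < 1"
    and zeros: "psi_plus q \<alpha> \<beta> n (of_real x1) = 0" "psi_plus q \<alpha> \<beta> n (of_real x2) = 0"
    and between: "\<And>t. x1 < t \<Longrightarrow> t < x2 \<Longrightarrow> psi_plus q \<alpha> \<beta> n (of_real t) \<noteq> 0"
  shows "\<exists>!t. x1 < t \<and> t < x2 \<and> psi_plus q \<alpha> \<beta> (n+1) (of_real t) = 0"
proof -
  define j where "j = nat (n+1)"
  define f where "f t = Re (zpsi j (of_real t))" for t
  define g where "g t = Re (zpsi (Suc j) (of_real t))" for t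
  have t: "t \<noteq> 0" "\<bar>t\<bar> < 1" if "x1 \<le> t" "t \<le> x2" for t
    using that assms by auto
  have f_iff: "psi_plus q \<alpha> \<beta> n (of_real t) = 0 \<longleftrightarrow> f t = 0" if "x1 \<le> t" "t \<le> x2" for t
    using t[OF that] psi_plus_eq_zpsi[of n "of_real t"] zpsi_of_real_eq_0_iff[of t j] assms(1)
    by (simp add: f_def j_def)
  have g_iff: "psi_plus q \<alpha> \<beta> (n+1) (of_real t) = 0 \<longleftrightarrow> g t = 0" if "x1 \<le> t" "t \<le> x2" for t
  proof -
    have "nat (n + 1 + 1) = Suc j"
      using assms(1) by (simp add: j_def)
    then show ?thesis
      using t[OF that] psi_plus_eq_zpsi[of "n+1" "of_real t"] zpsi_of_real_eq_0_iff[of t "Suc j"] assms(1)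
      by (simp add: g_def)
  qed
  have "\<exists>!t. x1 < t \<and> t < x2 \<and> g t = 0"
  proof (rule sturm_interlacing[OF \<open>x1 < x2\<close>])
    show "(f has_real_derivative Re (deriv (zpsi j) (of_real t))) (at t)"
      "(g has_real_derivative Re (deriv (zpsi (Suc j)) (of_real t))) (at t)"
      if "x1 \<le> t" "t \<le> x2" for t
      unfolding f_def[abs_def] g_def[abs_def] using t[OF that] by (auto intro: has_real_derivative_Re_zpsi)
    show "0 < f t * Re (deriv (zpsi (Suc j)) (of_real t)) - g t * Re (deriv (zpsi j) (of_real t))"
      if "x1 \<le> t" "t \<le> x2" for t
      using zpsi_wronskian_pos[OF t[OF that], of j] zpsi_real[of t j] zpsi_real[of t "Suc j"] t[OF that]
      by (simp add: f_def g_def zpsi_wronskian_def complex_is_Real_iff)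
    show "f x1 = 0" "f x2 = 0"
      using f_iff zeros assms by auto
    show "f t \<noteq> 0" if "x1 < t" "t < x2" for t
      using f_iff between that by force
  qed
  then show ?thesis
    using g_iff by (metis (no_types, lifting) less_imp_le)
qed

end

theorem propositionB2:
  fixes q \<alpha> \<beta> :: real and n :: int
  assumes "0 < q" "q < 1" "-1 < \<alpha>" "\<alpha> < 1" "\<beta> < 1" "n \<ge> -1"
  defines "D \<equiv> {z::complex. 0 < norm z \<and> norm z < 1}"
  shows "psi_plus q \<alpha> \<beta> n analytic_on D
    \<and> (\<forall>z\<in>D. psi_plus q \<alpha> \<beta> n z = 0 \<longrightarrow>
          z \<in> \<real> \<and> deriv (psi_plus q \<alpha> \<beta> n) z \<noteq> 0 \<and> psi_plus q \<alpha> \<beta> n (-z) = 0)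
    \<and> (\<forall>x1 x2::real. 0 < x1 \<and> x1 < x2 \<and> x2 < 1
          \<and> psi_plus q \<alpha> \<beta> n (of_real x1) = 0 \<and> psi_plus q \<alpha> \<beta> n (of_real x2) = 0
          \<and> (\<forall>t. x1 < t \<and> t < x2 \<longrightarrow> psi_plus q \<alpha> \<beta> n (of_real t) \<noteq> 0)
        \<longrightarrow> (\<exists>!t. x1 < t \<and> t < x2 \<and> psi_plus q \<alpha> \<beta> (n+1) (of_real t) = 0))"
proof -
  interpret psi_setting_pos q \<alpha> \<beta>
    using assms(1-5) by unfold_locales auto
  show ?thesis
    unfolding D_def
    using psi_plus_analytic psi_plus_zeros_real_simple psi_plus_minus_eq_0_iff
      psi_plus_interlacing assms(6)
    by auto
qed

end
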